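(* For all types $A,B,C,D$: (1) if $A\wedge B\equiv C\wedge D$ then $A\equiv C$ and $B\equiv D$; (2) if $A\Rightarrow B\equiv C\Rightarrow D$ then $A\equiv C$ and $B\equiv D$; (3) if $A\wedge B\equiv C\Rightarrow D$ then there exist types $D_1,D_2$ with $D\equiv D_1\wedge D_2$, $A\equiv C\Rightarrow D_1$ and $B\equiv C\Rightarrow D_2$.
   Context: Types: $A ::= \tau \mid A\Rightarrow A \mid A\wedge A$ with $\tau$ a single atomic type. The relation $\equiv$ on types is the smallest relation that is reflexive, symmetric, transitive, contains $A\Rightarrow (B\wedge C)\equiv (A\Rightarrow B)\wedge(A\Rightarrow C)$ for all $A,B,C$, and satisfies: $A\equiv C$ implies $A\Rightarrow B\equiv C\Rightarrow B$ and $A\wedge B\equiv C\wedge B$; $B\equiv C$ implies $A\Rightarrow B\equiv A\Rightarrow C$ and $A\wedge B\equiv A\wedge C$. *)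

theory Defs
  imports Main
begin

datatype ty = Atom | Arr ty ty | Conj ty ty

inductive tyeq :: "ty \<Rightarrow> ty \<Rightarrow> bool" where
  refl: "tyeq A A"
| sym: "tyeq A B \<Longrightarrow> tyeq B A"
| trans: "tyeq A B \<Longrightarrow> tyeq B C \<Longrightarrow> tyeq A C"
| distr: "tyeq (Arr A (Conj B C)) (Conj (Arr A B) (Arr A C))"
| arr_left: "tyeq A C \<Longrightarrow> tyeq (Arr A B) (Arr C B)"
| conj_left: "tyeq A C \<Longrightarrow> tyeq (Conj A B) (Conj C B)"
| arr_right: "tyeq B C \<Longrightarrow> tyeq (Arr A B) (Arr A C)"
| conj_right: "tyeq B C \<Longrightarrow> tyeq (Conj A B) (Conj A C)"

end

theory Submission
  imports Defs
begin

text \<open>Orienting the distributivity axiom from left to right gives a normal form in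
  which no implication has a conjunction as its codomain. Two types are equivalent
  exactly when their normal forms are equal, so all three claims reduce to
  syntactic properties of the normalising implication: it is injective, and it
  yields a conjunction only when its codomain is one.\<close>

declare tyeq.trans [trans]

fun arr_nf :: "ty \<Rightarrow> ty \<Rightarrow> ty" where
  "arr_nf a (Conj b c) = Conj (arr_nf a b) (arr_nf a c)"
| "arr_nf a Atom = Arr a Atom"
| "arr_nf a (Arr b c) = Arr a (Arr b c)"

fun ty_nf :: "ty \<Rightarrow> ty" where
  "ty_nf Atom = Atom"
| "ty_nf (Conj a b) = Conj (ty_nf a) (ty_nf b)"
| "ty_nf (Arr a b) = arr_nf (ty_nf a) (ty_nf b)"

lemma tyeq_Arr_arr_nf: "tyeq (Arr a b) (arr_nf a b)"
proof (induction b)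
  case (Conj b1 b2)
  have "tyeq (Arr a (Conj b1 b2)) (Conj (Arr a b1) (Arr a b2))"
    by (rule tyeq.distr)
  also have "tyeq \<dots> (Conj (arr_nf a b1) (Arr a b2))"
    using Conj.IH(1) by (rule tyeq.conj_left)
  also have "tyeq \<dots> (Conj (arr_nf a b1) (arr_nf a b2))"
    using Conj.IH(2) by (rule tyeq.conj_right)
  finally show ?case by simp
qed (simp_all add: tyeq.refl)

lemma tyeq_ty_nf: "tyeq A (ty_nf A)"
proof (induction A)
  case (Conj a b)
  have "tyeq (Conj a b) (Conj (ty_nf a) b)" using Conj.IH(1) by (rule tyeq.conj_left)
  also have "tyeq \<dots> (Conj (ty_nf a) (ty_nf b))" using Conj.IH(2) by (rule tyeq.conj_right)
  finally show ?case by simp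
next
  case (Arr a b)
  have "tyeq (Arr a b) (Arr (ty_nf a) b)" using Arr.IH(1) by (rule tyeq.arr_left)
  also have "tyeq \<dots> (Arr (ty_nf a) (ty_nf b))" using Arr.IH(2) by (rule tyeq.arr_right)
  also have "tyeq \<dots> (arr_nf (ty_nf a) (ty_nf b))" by (rule tyeq_Arr_arr_nf)
  finally show ?case by simp
qed (simp add: tyeq.refl)

lemma tyeq_imp_ty_nf_eq: "tyeq A B \<Longrightarrow> ty_nf A = ty_nf B"
  by (induction rule: tyeq.induct) auto

lemma tyeq_iff_ty_nf_eq: "tyeq A B \<longleftrightarrow> ty_nf A = ty_nf B"
proof
  assume "ty_nf A = ty_nf B"
  then show "tyeq A B"
    using tyeq_ty_nf[of A] tyeq_ty_nf[of B] by (metis tyeq.sym tyeq.trans)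
qed (rule tyeq_imp_ty_nf_eq)

lemma ty_nf_idem [simp]: "ty_nf (ty_nf A) = ty_nf A"
  using tyeq_imp_ty_nf_eq[OF tyeq_ty_nf[of A]] by simp

lemma arr_nf_inj: "arr_nf a b = arr_nf c d \<Longrightarrow> a = c \<and> b = d"
proof (induction b arbitrary: d)
  case Atom
  then show ?case by (cases d) auto
next
  case (Arr b1 b2)
  then show ?case by (cases d) auto
next
  case (Conj b1 b2)
  then show ?case by (cases d) auto
qed

lemma arr_nf_eq_ConjD:
  "arr_nf a b = Conj x y \<Longrightarrow> \<exists>b1 b2. b = Conj b1 b2 \<and> x = arr_nf a b1 \<and> y = arr_nf a b2"
  by (cases b) auto

theorem lemma4:
  fixes A B C D :: ty
  shows "(tyeq (Conj A B) (Conj C D) \<longrightarrow> tyeq A C \<and> tyeq B D)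
       \<and> (tyeq (Arr A B) (Arr C D) \<longrightarrow> tyeq A C \<and> tyeq B D)
       \<and> (tyeq (Conj A B) (Arr C D) \<longrightarrow>
            (\<exists>D1 D2. tyeq D (Conj D1 D2) \<and> tyeq A (Arr C D1) \<and> tyeq B (Arr C D2)))"
proof (intro conjI impI)
  assume "tyeq (Conj A B) (Conj C D)"
  then show "tyeq A C" "tyeq B D" by (simp_all add: tyeq_iff_ty_nf_eq)
next
  assume "tyeq (Arr A B) (Arr C D)"
  then show "tyeq A C" "tyeq B D" by (auto simp: tyeq_iff_ty_nf_eq dest: arr_nf_inj)
next
  assume "tyeq (Conj A B) (Arr C D)"
  then have "arr_nf (ty_nf C) (ty_nf D) = Conj (ty_nf A) (ty_nf B)"
    by (simp add: tyeq_iff_ty_nf_eq)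
  then obtain d1 d2 where d: "ty_nf D = Conj d1 d2"
    and "ty_nf A = arr_nf (ty_nf C) d1" "ty_nf B = arr_nf (ty_nf C) d2"
    using arr_nf_eq_ConjD by blast
  moreover from d have "ty_nf d1 = d1" "ty_nf d2 = d2"
    using ty_nf_idem[of D] by simp_all
  ultimately have "tyeq D (Conj d1 d2) \<and> tyeq A (Arr C d1) \<and> tyeq B (Arr C d2)"
    by (simp add: tyeq_iff_ty_nf_eq)
  then show "\<exists>D1 D2. tyeq D (Conj D1 D2) \<and> tyeq A (Arr C D1) \<and> tyeq B (Arr C D2)"
    by blast
qed

end
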